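(* Let $\mathcal{H}$ be a connected $k$-uniform hypergraph on $n$ vertices with degrees $d_1,\dots,d_n$, and let $b_{i}>0$ for each $1\leq i\leq n$. For $1\le p\le n$ put \[ b_{p}^{\prime}=b_{p}^{-(k-1)}\sum_{\{p,p_{2},\cdots,p_{k}\}\in E(\mathcal{H})}b_{p_{2}}\cdots b_{p_{k}}. \] Then \[ \rho(\mathcal{Q}(\mathcal{H}))\leq\max_{e\in E(\mathcal{H})}\max_{\{i,j\}\subseteq e}\frac{d_{i}+d_{j}+\sqrt{(d_{i}-d_{j})^{2}+4b_{i}^{\prime}b_{j}^{\prime}}}{2}. \]
   Context: A $k$-uniform hypergraph $\mathcal{H}$ on vertex set $[n]$ has edges that are $k$-element subsets of $[n]$; $d_i$ is the number of edges containing vertex $i$. The sum over $\{p,p_2,\dots,p_k\}\in E(\mathcal{H})$ runs over the edges containing $p$, with $p_2,\dots,p_k$ the other vertices of that edge. The adjacency tensor $\mathcal{A}(\mathcal{H})$ has entries $\mathcal{A}_{i_1\cdots i_k}=\frac{1}{(k-1)!}$ if $\{i_1,\dots,i_k\}\in E(\mathcal{H})$ and $0$ otherwise; $\mathcal{D}(\mathcal{H})$ is the diagonal tensor with $\mathcal{D}_{i\cdots i}=d_i$; $\mathcal{Q}(\mathcal{H})=\mathcal{D}(\mathcal{H})+\mathcal{A}(\mathcal{H})$ is the signless Laplacian tensor. For a tensor $\mathcal{T}$ and $x\in\mathbb{C}^n$, $(\mathcal{T}x)_i=\sum_{i_2,\dots,i_k}\mathcal{T}_{ii_2\cdots i_k}x_{i_2}\cdots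 x_{i_k}$; $\lambda$ is an eigenvalue if $\mathcal{T}x=\lambda x^{[k-1]}$ for some nonzero $x$, where $x^{[k-1]}=(x_1^{k-1},\dots,x_n^{k-1})^T$; $\rho(\mathcal{T})$ is the maximum modulus of eigenvalues. *)

theory Defs
  imports Complex_Main
begin

text \<open>Vertex set [n] is rendered as {..<n} (0-indexed). A hypergraph is a set of edges E.\<close>

definition k_uniform_hypergraph :: "nat \<Rightarrow> nat \<Rightarrow> nat set set \<Rightarrow> bool" where
  "k_uniform_hypergraph n k E \<longleftrightarrow> (\<forall>e\<in>E. e \<subseteq> {..<n} \<and> card e = k)"

definition hdeg :: "nat set set \<Rightarrow> nat \<Rightarrow> nat" where
  "hdeg E i = card {e\<in>E. i \<in> e}"

definition hadjacent :: "nat set set \<Rightarrow> nat \<Rightarrow> nat \<Rightarrow> bool" where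
  "hadjacent E i j \<longleftrightarrow> (\<exists>e\<in>E. i \<in> e \<and> j \<in> e)"

definition hconnected :: "nat \<Rightarrow> nat set set \<Rightarrow> bool" where
  "hconnected n E \<longleftrightarrow> (\<forall>i<n. \<forall>j<n. (hadjacent E)\<^sup>*\<^sup>* i j)"

text \<open>Order-k tensors of dimension n: entries indexed by lists of length k over {..<n}.\<close>

definition adj_tensor :: "nat \<Rightarrow> nat set set \<Rightarrow> nat list \<Rightarrow> complex" where
  "adj_tensor k E is = (if set is \<in> E then 1 / of_nat (fact (k - 1)) else 0)"

definition deg_tensor :: "nat set set \<Rightarrow> nat list \<Rightarrow> complex" where
  "deg_tensor E is = (if is \<noteq> [] \<and> (\<forall>j\<in>set is. j = hd is) then of_nat (hdeg E (hd is)) else 0)"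

definition slap_tensor :: "nat \<Rightarrow> nat set set \<Rightarrow> nat list \<Rightarrow> complex" where
  "slap_tensor k E is = deg_tensor E is + adj_tensor k E is"

definition tensor_apply :: "nat \<Rightarrow> nat \<Rightarrow> (nat list \<Rightarrow> complex) \<Rightarrow> (nat \<Rightarrow> complex) \<Rightarrow> nat \<Rightarrow> complex" where
  "tensor_apply n k T x i =
     (\<Sum>is\<in>{is. length is = k - 1 \<and> set is \<subseteq> {..<n}}. T (i # is) * prod_list (map x is))"

definition tensor_eigenvalue :: "nat \<Rightarrow> nat \<Rightarrow> (nat list \<Rightarrow> complex) \<Rightarrow> complex \<Rightarrow> bool" where
  "tensor_eigenvalue n k T mu \<longleftrightarrow>
     (\<exists>x::nat \<Rightarrow> complex. (\<exists>i<n. x i \<noteq> 0) \<and>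
        (\<forall>i<n. tensor_apply n k T x i = mu * x i ^ (k - 1)))"

definition tensor_spectral_radius :: "nat \<Rightarrow> nat \<Rightarrow> (nat list \<Rightarrow> complex) \<Rightarrow> real" where
  "tensor_spectral_radius n k T = Sup {cmod mu | mu. tensor_eigenvalue n k T mu}"

definition bprime :: "nat \<Rightarrow> nat set set \<Rightarrow> (nat \<Rightarrow> real) \<Rightarrow> nat \<Rightarrow> real" where
  "bprime k E b p = (b p) powr (- real (k - 1)) * (\<Sum>e\<in>{e\<in>E. p \<in> e}. \<Prod>j\<in>e - {p}. b j)"

end

theory Submission
  imports Defs "HOL-Combinatorics.Multiset_Permutations" "Jordan_Normal_Form.Spectral_Radius"
begin

text \<open>
  Let x be an eigenvector for mu and put y j = |x j| / b j. Choose p maximising y over all vertices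
  and q maximising y over the neighbours of p (connectedness only serves to make the latter set
  nonempty). Since (Q x) v = d v * x v ^ (k - 1) + (sum over edges e containing v of the product of
  x over e - {v}), the eigen-equations at p and q give
  |mu - d p| * y p ^ (k - 1) <= b' p * y q ^ (k - 1) and |mu - d q| * y q ^ (k - 1) <= b' q * y p ^ (k - 1).
  Multiplying them, ||mu| - d p| * ||mu| - d q| <= b' p * b' q, so |mu| is at most the larger root
  of (t - d p) * (t - d q) = b' p * b' q, and p, q lie in a common edge.
\<close>

definition hneighbours :: "nat set set \<Rightarrow> nat \<Rightarrow> nat set" where
  "hneighbours E p = {j. j \<noteq> p \<and> hadjacent E p j}"

lemma finite_maximizerE:
  fixes f :: "'a \<Rightarrow> 'b::linorder"
  assumes "finite S" "S \<noteq> {}"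
  obtains p where "p \<in> S" "\<And>i. i \<in> S \<Longrightarrow> f i \<le> f p"
proof -
  have "Max (f ` S) \<in> f ` S" using assms by simp
  then obtain p where "p \<in> S" "f p = Max (f ` S)" by auto
  with assms show thesis by (intro that) (auto intro: Max_ge)
qed

lemma rtranclp_imp_step_to_other:
  assumes "R\<^sup>*\<^sup>* a c" "a \<noteq> c"
  shows "\<exists>z. z \<noteq> a \<and> R a z"
  using assms
proof (induction rule: converse_rtranclp_induct)
  case (step a y)
  then show ?case by (cases "y = a") auto
qed simp

lemma abs_mult_le_imp_le_larger_root:
  fixes t a b c :: real
  assumes "\<bar>t - a\<bar> * \<bar>t - b\<bar> \<le> c" "c \<ge> 0"
  shows "t \<le> (a + b + sqrt ((a - b)^2 + 4 * c)) / 2"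
proof (cases "t \<le> max a b")
  case True
  have "t \<le> (a + b + \<bar>a - b\<bar>) / 2" using True by (auto simp: max_def abs_if)
  moreover have "sqrt ((a - b)^2) \<le> sqrt ((a - b)^2 + 4 * c)"
    using assms(2) by (intro real_sqrt_le_mono) simp
  ultimately show ?thesis by simp
next
  case False
  then have "(2 * t - a - b)^2 \<le> (a - b)^2 + 4 * c"
    using assms(1) by (simp add: power2_eq_square algebra_simps)
  then have "sqrt ((2 * t - a - b)^2) \<le> sqrt ((a - b)^2 + 4 * c)"
    by (rule real_sqrt_le_mono)
  with False show ?thesis by simp
qed

lemma mult_le_mult_of_cross_bounds:
  fixes a b c d u v :: real
  assumes "a * u \<le> c * v" "b * v \<le> d * u"
    and "u > 0" "v \<ge> 0" "a \<ge> 0" "b \<ge> 0" "c \<ge> 0" "d \<ge> 0"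
  shows "a * b \<le> c * d"
proof (cases "v = 0")
  case True
  then show ?thesis using assms by (simp add: mult_le_0_iff)
next
  case False
  have "(a * u) * (b * v) \<le> (c * v) * (d * u)"
    by (rule mult_mono) (use assms in auto)
  then have "(a * b) * (u * v) \<le> (c * d) * (u * v)"
    by (simp add: algebra_simps)
  then show ?thesis using assms False by simp
qed

lemma norm_prod_le_prod_weights_mult_power:
  fixes x :: "'a \<Rightarrow> 'b::real_normed_field"
  assumes "\<And>j. j \<in> F \<Longrightarrow> b j > 0" "\<And>j. j \<in> F \<Longrightarrow> norm (x j) / b j \<le> M"
  shows "norm (\<Prod>j\<in>F. x j) \<le> (\<Prod>j\<in>F. b j) * M ^ card F"
proof (cases "finite F")
  case True
  have "norm (\<Prod>j\<in>F. x j) = (\<Prod>j\<in>F. b j * (norm (x j) / b j))"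
    unfolding prod_norm[symmetric] using assms(1) by (intro prod.cong) (auto simp: less_imp_neq[symmetric])
  also have "\<dots> = (\<Prod>j\<in>F. b j) * (\<Prod>j\<in>F. norm (x j) / b j)"
    by (rule prod.distrib)
  also have "\<dots> \<le> (\<Prod>j\<in>F. b j) * (\<Prod>j\<in>F. M)"
    using assms by (intro mult_left_mono prod_mono prod_nonneg) (auto simp: less_imp_le)
  finally show ?thesis using True by simp
qed simp

lemma finite_index_lists: "finite {is::nat list. length is = m \<and> set is \<subseteq> {..<n}}"
  using finite_lists_length_eq[of "{..<n}" m] by (simp add: conj_commute)

lemma card_edge_le_order:
  assumes "k_uniform_hypergraph n k E" "e \<in> E"
  shows "k \<le> n"
  using assms card_mono[of "{..<n}" e] by (auto simp: k_uniform_hypergraph_def)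

lemma finite_edges:
  assumes "k_uniform_hypergraph n k E"
  shows "finite E"
  using assms by (intro finite_subset[of E "Pow {..<n}"]) (auto simp: k_uniform_hypergraph_def)

lemma hneighbours_subset:
  assumes "k_uniform_hypergraph n k E"
  shows "hneighbours E p \<subseteq> {..<n}"
  using assms by (auto simp: hneighbours_def hadjacent_def k_uniform_hypergraph_def)

lemma hneighbours_nonempty:
  assumes "hconnected n E" "2 \<le> n" "p < n"
  shows "hneighbours E p \<noteq> {}"
proof -
  define j where "j = (if p = 0 then 1 else 0::nat)"
  have "j < n" "p \<noteq> j" using assms(2) by (auto simp: j_def)
  then have "(hadjacent E)\<^sup>*\<^sup>* p j" using assms(1,3) unfolding hconnected_def by blast
  then obtain z where "z \<noteq> p" "hadjacent E p z"
    using rtranclp_imp_step_to_other \<open>p \<noteq> j\<close> by metis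
  then show ?thesis unfolding hneighbours_def by blast
qed

lemma bprime_nonneg:
  assumes "k_uniform_hypergraph n k E" "\<And>i. i < n \<Longrightarrow> b i > 0"
  shows "bprime k E b p \<ge> 0"
  unfolding bprime_def
proof (intro mult_nonneg_nonneg sum_nonneg prod_nonneg)
  fix e j assume "e \<in> {e \<in> E. p \<in> e}" "j \<in> e - {p}"
  with assms(1) have "j < n" by (auto simp: k_uniform_hypergraph_def)
  with assms(2) show "0 \<le> b j" by (simp add: less_imp_le)
qed simp

lemma tensor_apply_add:
  "tensor_apply n k (\<lambda>is. S is + T is) x i = tensor_apply n k S x i + tensor_apply n k T x i"
  by (simp add: tensor_apply_def distrib_right sum.distrib)

lemma tensor_apply_deg_tensor:
  assumes "p < n"
  shows "tensor_apply n k (deg_tensor E) x p = of_nat (hdeg E p) * x p ^ (k - 1)"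
proof -
  define L where "L = {is::nat list. length is = k - 1 \<and> set is \<subseteq> {..<n}}"
  have "tensor_apply n k (deg_tensor E) x p =
      (\<Sum>is\<in>L. if is = replicate (k - 1) p then of_nat (hdeg E p) * x p ^ (k - 1) else 0)"
    unfolding tensor_apply_def L_def[symmetric]
  proof (rule sum.cong)
    fix "is" assume "is \<in> L"
    then have "(\<forall>j\<in>set is. j = p) \<longleftrightarrow> is = replicate (k - 1) p"
      by (auto simp: L_def) (metis replicate_length_same)
    then show "deg_tensor E (p # is) * prod_list (map x is) =
        (if is = replicate (k - 1) p then of_nat (hdeg E p) * x p ^ (k - 1) else 0)"
      by (auto simp: deg_tensor_def prod_list_replicate)
  qed simp
  also have "\<dots> = of_nat (hdeg E p) * x p ^ (k - 1)"
    using assms finite_index_lists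
    by (subst sum.delta) (auto simp: L_def set_replicate_conv_if)
  finally show ?thesis .
qed

text \<open>Each edge through \<open>p\<close> is hit by the \<open>(k-1)!\<close> orderings of its other vertices,
  which cancels the normalisation of the adjacency tensor.\<close>

lemma tensor_apply_adj_tensor:
  assumes "k \<ge> 1" and H: "k_uniform_hypergraph n k E"
  shows "tensor_apply n k (adj_tensor k E) x p = (\<Sum>e\<in>{e\<in>E. p \<in> e}. \<Prod>j\<in>e - {p}. x j)"
proof -
  define L where "L = {is::nat list. length is = k - 1 \<and> set is \<subseteq> {..<n}}"
  have edge: "finite e" "card e = k" "e \<subseteq> {..<n}" if "e \<in> E" for e
    using H that \<open>k \<ge> 1\<close> card_ge_0_finite[of e] by (auto simp: k_uniform_hypergraph_def)
  have orderings: "{is\<in>L. set (p # is) \<in> E} =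
      (\<Union>e\<in>{e\<in>E. p \<in> e}. permutations_of_set (e - {p}))"
  proof (intro equalityI subsetI)
    fix "is" assume "is \<in> {is\<in>L. set (p # is) \<in> E}"
    then have "card (set (p # is)) = length (p # is)" "set (p # is) \<in> E"
      using edge \<open>k \<ge> 1\<close> by (auto simp: L_def)
    with card_distinct have "distinct (p # is)" "set (p # is) \<in> E" by blast+
    then show "is \<in> (\<Union>e\<in>{e\<in>E. p \<in> e}. permutations_of_set (e - {p}))"
      by (auto simp: permutations_of_set_def)
  next
    fix "is" assume "is \<in> (\<Union>e\<in>{e\<in>E. p \<in> e}. permutations_of_set (e - {p}))"
    then obtain e where e: "e \<in> E" "p \<in> e" and "is \<in> permutations_of_set (e - {p})" by auto
    then have "set (p # is) = e" "length is = card (e - {p})"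
      by (auto simp: permutations_of_set_def length_finite_permutations_of_set)
    with e edge[OF e(1)] show "is \<in> {is\<in>L. set (p # is) \<in> E}" by (auto simp: L_def)
  qed
  have disjoint: "permutations_of_set (e - {p}) \<inter> permutations_of_set (e' - {p}) = {}"
    if "e \<in> {e\<in>E. p \<in> e}" "e' \<in> {e\<in>E. p \<in> e}" "e \<noteq> e'" for e e'
  proof -
    have "e - {p} \<noteq> e' - {p}" using that by blast
    then show ?thesis by (metis disjoint_iff permutations_of_setD(1))
  qed
  have "tensor_apply n k (adj_tensor k E) x p =
      (\<Sum>is\<in>L. if set (p # is) \<in> E then prod_list (map x is) / fact (k - 1) else 0)"
    unfolding tensor_apply_def L_def[symmetric] by (rule sum.cong) (simp_all add: adj_tensor_def)
  also have "\<dots> = (\<Sum>is\<in>{is\<in>L. set (p # is) \<in> E}. prod_list (map x is) / fact (k - 1))"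
    by (rule sum.inter_filter[symmetric]) (simp add: L_def finite_index_lists)
  also have "\<dots> = (\<Sum>e\<in>{e\<in>E. p \<in> e}. \<Sum>is\<in>permutations_of_set (e - {p}). prod_list (map x is) / fact (k - 1))"
    unfolding orderings using disjoint finite_edges[OF H] by (intro sum.UNION_disjoint) auto
  also have "\<dots> = (\<Sum>e\<in>{e\<in>E. p \<in> e}. \<Prod>j\<in>e - {p}. x j)"
  proof (rule sum.cong[OF refl])
    fix e assume e: "e \<in> {e\<in>E. p \<in> e}"
    have "(\<Sum>is\<in>permutations_of_set (e - {p}). prod_list (map x is) / fact (k - 1))
        = (\<Sum>is\<in>permutations_of_set (e - {p}). (\<Prod>j\<in>e - {p}. x j) / fact (k - 1))"
      by (rule sum.cong[OF refl]) (metis permutations_of_setD prod.distinct_set_conv_list)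
    also have "\<dots> = (\<Prod>j\<in>e - {p}. x j)"
      using e edge by (simp add: card_permutations_of_set)
    finally show "(\<Sum>is\<in>permutations_of_set (e - {p}). prod_list (map x is) / fact (k - 1))
        = (\<Prod>j\<in>e - {p}. x j)" .
  qed
  finally show ?thesis .
qed

lemma tensor_apply_slap_tensor:
  assumes "k \<ge> 1" "k_uniform_hypergraph n k E" "p < n"
  shows "tensor_apply n k (slap_tensor k E) x p =
     of_nat (hdeg E p) * x p ^ (k - 1) + (\<Sum>e\<in>{e\<in>E. p \<in> e}. \<Prod>j\<in>e - {p}. x j)"
  using assms tensor_apply_add[of n k "deg_tensor E" "adj_tensor k E" x p]
  by (simp add: slap_tensor_def[abs_def] tensor_apply_deg_tensor tensor_apply_adj_tensor)

definition edge_pair_bound :: "nat \<Rightarrow> nat set set \<Rightarrow> (nat \<Rightarrow> real) \<Rightarrow> nat \<Rightarrow> nat \<Rightarrow> real" where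
  "edge_pair_bound k E b i j = (real (hdeg E i) + real (hdeg E j)
     + sqrt ((real (hdeg E i) - real (hdeg E j))^2 + 4 * bprime k E b i * bprime k E b j)) / 2"

lemma slap_tensor_eigen_equation_bound:
  assumes "k \<ge> 1" and H: "k_uniform_hypergraph n k E" and b: "\<And>i. i < n \<Longrightarrow> b i > 0"
    and "p < n"
    and eig: "tensor_apply n k (slap_tensor k E) x p = mu * x p ^ (k - 1)"
    and M: "\<And>j. j \<in> hneighbours E p \<Longrightarrow> cmod (x j) / b j \<le> M"
  shows "cmod (mu - of_nat (hdeg E p)) * (cmod (x p) / b p) ^ (k - 1) \<le> bprime k E b p * M ^ (k - 1)"
proof -
  define S where "S = (\<Sum>e\<in>{e\<in>E. p \<in> e}. \<Prod>j\<in>e - {p}. b j)"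
  have "(mu - of_nat (hdeg E p)) * x p ^ (k - 1) = (\<Sum>e\<in>{e\<in>E. p \<in> e}. \<Prod>j\<in>e - {p}. x j)"
    using tensor_apply_slap_tensor[OF \<open>k \<ge> 1\<close> H \<open>p < n\<close>, of x] eig by (simp add: algebra_simps)
  then have "cmod (mu - of_nat (hdeg E p)) * cmod (x p) ^ (k - 1)
      = cmod (\<Sum>e\<in>{e\<in>E. p \<in> e}. \<Prod>j\<in>e - {p}. x j)"
    by (metis norm_mult norm_power)
  also have "\<dots> \<le> (\<Sum>e\<in>{e\<in>E. p \<in> e}. cmod (\<Prod>j\<in>e - {p}. x j))"
    by (rule norm_sum)
  also have "\<dots> \<le> (\<Sum>e\<in>{e\<in>E. p \<in> e}. (\<Prod>j\<in>e - {p}. b j) * M ^ (k - 1))"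
  proof (rule sum_mono)
    fix e assume e: "e \<in> {e\<in>E. p \<in> e}"
    then have "card (e - {p}) = k - 1" "e - {p} \<subseteq> hneighbours E p" "e \<subseteq> {..<n}"
      using H by (auto simp: k_uniform_hypergraph_def hneighbours_def hadjacent_def)
    then show "cmod (\<Prod>j\<in>e - {p}. x j) \<le> (\<Prod>j\<in>e - {p}. b j) * M ^ (k - 1)"
      using norm_prod_le_prod_weights_mult_power[of "e - {p}" b x M] b M by auto
  qed
  also have "\<dots> = S * M ^ (k - 1)"
    by (simp add: S_def sum_distrib_right)
  finally have bound: "cmod (mu - of_nat (hdeg E p)) * cmod (x p) ^ (k - 1) \<le> S * M ^ (k - 1)" .
  have bp: "b p > 0" using b \<open>p < n\<close> by simp
  have "cmod (mu - of_nat (hdeg E p)) * (cmod (x p) / b p) ^ (k - 1)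
      = cmod (mu - of_nat (hdeg E p)) * cmod (x p) ^ (k - 1) / b p ^ (k - 1)"
    by (simp add: power_divide)
  also have "\<dots> \<le> S * M ^ (k - 1) / b p ^ (k - 1)"
    using bound bp by (intro divide_right_mono) auto
  also have "\<dots> = bprime k E b p * M ^ (k - 1)"
    unfolding bprime_def S_def using bp by (simp add: powr_minus_divide powr_realpow)
  finally show ?thesis .
qed

lemma slap_tensor_eigenvalue_le_edge_pair_bound:
  assumes "k \<ge> 1" and H: "k_uniform_hypergraph n k E" and conn: "hconnected n E" and "2 \<le> n"
    and b: "\<And>i. i < n \<Longrightarrow> b i > 0"
    and "tensor_eigenvalue n k (slap_tensor k E) mu"
  shows "\<exists>i j. (\<exists>e\<in>E. i \<in> e \<and> j \<in> e \<and> i \<noteq> j) \<and>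
    cmod mu \<le> edge_pair_bound k E b i j"
proof -
  obtain x where "\<exists>i<n. x i \<noteq> 0"
    and eig: "\<And>i. i < n \<Longrightarrow> tensor_apply n k (slap_tensor k E) x i = mu * x i ^ (k - 1)"
    using assms(6) unfolding tensor_eigenvalue_def by blast
  define y where "y j = cmod (x j) / b j" for j
  obtain p where "p < n" and p_max: "\<And>i. i < n \<Longrightarrow> y i \<le> y p"
    by (rule finite_maximizerE[of "{..<n}" y]) (use \<open>2 \<le> n\<close> in \<open>auto simp: lessThan_empty_iff\<close>)
  have "y p > 0"
  proof -
    obtain i where "i < n" "x i \<noteq> 0" using \<open>\<exists>i<n. x i \<noteq> 0\<close> by blast
    then have "y i > 0" using b by (simp add: y_def)
    with p_max[OF \<open>i < n\<close>] show ?thesis by simp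
  qed
  have "finite (hneighbours E p)"
    using hneighbours_subset[OF H] by (rule finite_subset) simp
  then obtain q where q: "q \<in> hneighbours E p" and q_max: "\<And>j. j \<in> hneighbours E p \<Longrightarrow> y j \<le> y q"
    using finite_maximizerE[of "hneighbours E p" y] hneighbours_nonempty[OF conn \<open>2 \<le> n\<close> \<open>p < n\<close>]
    by blast
  have "q < n" using q hneighbours_subset[OF H] by blast
  have bound_p: "cmod (mu - of_nat (hdeg E p)) * y p ^ (k - 1) \<le> bprime k E b p * y q ^ (k - 1)"
    unfolding y_def
    by (rule slap_tensor_eigen_equation_bound[OF \<open>k \<ge> 1\<close> H b \<open>p < n\<close> eig[OF \<open>p < n\<close>]])
      (auto intro: q_max[unfolded y_def])
  have bound_q: "cmod (mu - of_nat (hdeg E q)) * y q ^ (k - 1) \<le> bprime k E b q * y p ^ (k - 1)"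
    unfolding y_def
    by (rule slap_tensor_eigen_equation_bound[OF \<open>k \<ge> 1\<close> H b \<open>q < n\<close> eig[OF \<open>q < n\<close>]])
      (use p_max hneighbours_subset[OF H] in \<open>auto simp: y_def\<close>)
  have b'_nonneg: "bprime k E b i \<ge> 0" for i
    using bprime_nonneg[of n k E b] H b by blast
  have "cmod (mu - of_nat (hdeg E p)) * cmod (mu - of_nat (hdeg E q)) \<le> bprime k E b p * bprime k E b q"
    using \<open>y p > 0\<close> b[OF \<open>q < n\<close>] b'_nonneg
    by (intro mult_le_mult_of_cross_bounds[OF bound_p bound_q]) (simp_all add: y_def)
  moreover have "\<bar>cmod mu - real d\<bar> \<le> cmod (mu - of_nat d)" for d
    by (metis norm_of_nat norm_triangle_ineq3)
  ultimately have "\<bar>cmod mu - real (hdeg E p)\<bar> * \<bar>cmod mu - real (hdeg E q)\<bar>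
      \<le> bprime k E b p * bprime k E b q"
    by (meson abs_ge_zero mult_mono norm_ge_zero order_trans)
  then have "cmod mu \<le> edge_pair_bound k E b p q"
    unfolding edge_pair_bound_def mult.assoc
    using b'_nonneg by (intro abs_mult_le_imp_le_larger_root) auto
  moreover have "\<exists>e\<in>E. p \<in> e \<and> q \<in> e \<and> p \<noteq> q"
    using q by (auto simp: hneighbours_def hadjacent_def)
  ultimately show ?thesis by blast
qed

lemma finite_edge_pair_bounds:
  assumes "k_uniform_hypergraph n k E"
  shows "finite {edge_pair_bound k E b i j | i j. \<exists>e\<in>E. i \<in> e \<and> j \<in> e \<and> i \<noteq> j}"
proof (rule finite_subset)
  show "{edge_pair_bound k E b i j | i j. \<exists>e\<in>E. i \<in> e \<and> j \<in> e \<and> i \<noteq> j}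
      \<subseteq> {edge_pair_bound k E b i j | i j. i < n \<and> j < n}"
    using assms unfolding k_uniform_hypergraph_def by blast
qed (simp add: finite_image_set2)

lemma tensor_apply_order2: "tensor_apply n 2 T x i = (\<Sum>j<n. T [i, j] * x j)"
proof -
  have "{is::nat list. length is = 2 - 1 \<and> set is \<subseteq> {..<n}} = (\<lambda>j. [j]) ` {..<n}"
    by (auto simp: length_Suc_conv)
  moreover have "inj_on (\<lambda>j::nat. [j]) {..<n}" by (simp add: inj_on_def)
  ultimately show ?thesis by (simp add: tensor_apply_def sum.reindex)
qed

lemma ex_tensor_eigenvalue_order2:
  assumes "n \<ge> 1"
  shows "\<exists>mu. tensor_eigenvalue n 2 T mu"
proof -
  define A where "A = mat n n (\<lambda>(i, j). T [i, j])"
  have A: "A \<in> carrier_mat n n" by (simp add: A_def)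
  obtain mu where "mu \<in> spectrum A" using spectrum_non_empty[OF A] assms by auto
  then obtain v where v: "v \<in> carrier_vec n" "v \<noteq> 0\<^sub>v n" "A *\<^sub>v v = mu \<cdot>\<^sub>v v"
    unfolding spectrum_def eigenvalue_def eigenvector_def using A by auto
  define x where "x j = (if j < n then v $ j else 0)" for j
  have "\<exists>i<n. x i \<noteq> 0"
  proof (rule ccontr)
    assume "\<not> (\<exists>i<n. x i \<noteq> 0)"
    then have "v = 0\<^sub>v n" using v(1) by (intro eq_vecI) (auto simp: x_def)
    with v(2) show False by simp
  qed
  moreover have "tensor_apply n 2 T x i = mu * x i ^ (2 - 1)" if "i < n" for i
  proof -
    have "(\<Sum>j<n. T [i, j] * x j) = (A *\<^sub>v v) $ i"
      using that v(1) by (simp add: A_def scalar_prod_def x_def lessThan_atLeast0)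
    also have "\<dots> = mu * x i" using v that by (simp add: x_def)
    finally show ?thesis by (simp add: tensor_apply_order2)
  qed
  ultimately show ?thesis unfolding tensor_eigenvalue_def by blast
qed

text \<open>For \<open>k \<ge> 3\<close> every edge through a vertex \<open>i\<close> has at least two further vertices, so the
  product over them vanishes on a coordinate vector: coordinate vectors are eigenvectors.\<close>

lemma slap_tensor_eigenvalue_hdeg:
  assumes "k \<ge> 3" and H: "k_uniform_hypergraph n k E" and "v < n"
  shows "tensor_eigenvalue n k (slap_tensor k E) (of_nat (hdeg E v))"
proof -
  define x where "x j = (if j = v then 1 else 0::complex)" for j
  have "(\<Prod>j\<in>e - {i}. x j) = 0" if "e \<in> E" "i \<in> e" for e i
  proof -
    have "finite e" "card (e - {i} - {v}) \<ge> 1"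
      using H that \<open>k \<ge> 3\<close> card_ge_0_finite[of e]
      by (auto simp: k_uniform_hypergraph_def card_Diff_singleton_if)
    then obtain j where "j \<in> e - {i}" "j \<noteq> v"
      by (metis DiffE card.empty equals0I insertI1 not_one_le_zero)
    with \<open>finite e\<close> show ?thesis by (intro prod_zero) (auto simp: x_def)
  qed
  then have "tensor_apply n k (slap_tensor k E) x i = of_nat (hdeg E v) * x i ^ (k - 1)" if "i < n" for i
    using tensor_apply_slap_tensor[of k n E i x] H that \<open>k \<ge> 3\<close> by (simp add: x_def)
  moreover have "\<exists>i<n. x i \<noteq> 0" using \<open>v < n\<close> by (auto simp: x_def)
  ultimately show ?thesis unfolding tensor_eigenvalue_def by blast
qed

lemma ex_slap_tensor_eigenvalue:
  assumes "k \<ge> 2" "k_uniform_hypergraph n k E" "n \<ge> 1"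
  shows "\<exists>mu. tensor_eigenvalue n k (slap_tensor k E) mu"
proof (cases "k = 2")
  case True
  with assms(3) show ?thesis using ex_tensor_eigenvalue_order2 by simp
next
  case False
  with assms show ?thesis using slap_tensor_eigenvalue_hdeg[of k n E 0] by auto
qed

theorem theorem2p2:
  fixes n k :: nat and E :: "nat set set" and b :: "nat \<Rightarrow> real"
  assumes "k \<ge> 2"
    and "k_uniform_hypergraph n k E"
    and "hconnected n E"
    and "E \<noteq> {}"
    and "\<And>i. i < n \<Longrightarrow> b i > 0"
  shows "tensor_spectral_radius n k (slap_tensor k E) \<le>
    Max {(real (hdeg E i) + real (hdeg E j)
          + sqrt ((real (hdeg E i) - real (hdeg E j))^2 + 4 * bprime k E b i * bprime k E b j)) / 2
         | i j. \<exists>e\<in>E. i \<in> e \<and> j \<in> e \<and> i \<noteq> j}" (is "_ \<le> Max ?S")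
proof -
  obtain e where "e \<in> E" using assms(4) by blast
  with assms(1,2) have "2 \<le> n" using card_edge_le_order by fastforce
  have S: "?S = {edge_pair_bound k E b i j | i j. \<exists>e\<in>E. i \<in> e \<and> j \<in> e \<and> i \<noteq> j}"
    by (simp only: edge_pair_bound_def)
  have "finite ?S"
    unfolding S using assms(2) by (rule finite_edge_pair_bounds)
  have "cmod mu \<le> Max ?S" if eig: "tensor_eigenvalue n k (slap_tensor k E) mu" for mu
  proof -
    have "\<exists>i j. (\<exists>e\<in>E. i \<in> e \<and> j \<in> e \<and> i \<noteq> j) \<and> cmod mu \<le> edge_pair_bound k E b i j"
      by (rule slap_tensor_eigenvalue_le_edge_pair_bound)
        (use assms(1) in simp, fact assms(2), fact assms(3), fact \<open>2 \<le> n\<close>, fact assms(5), fact eig)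
    then obtain i j where "edge_pair_bound k E b i j \<in> ?S" "cmod mu \<le> edge_pair_bound k E b i j"
      unfolding S by blast
    with \<open>finite ?S\<close> show ?thesis by (meson Max_ge order_trans)
  qed
  moreover have "\<exists>mu. tensor_eigenvalue n k (slap_tensor k E) mu"
    using ex_slap_tensor_eigenvalue assms(1,2) \<open>2 \<le> n\<close> by simp
  ultimately show ?thesis
    unfolding tensor_spectral_radius_def by (intro cSup_least) auto
qed

end
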